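(* Let $d\ge 3$, let $\mathcal M$ be a model of $\mathrm{PQM}_d$ with domain $\mathbb M$, and let $\kappa:\mathbb M\to\mathbb H_d$ be the function such that for all $m\in\mathbb M$, $p\in\mathbb H_d$: $[m:p]^{\mathcal M}\iff\kappa(m)\le p$. Then for every $v\in\mathbb V_d$ there exists $m\in\mathbb M$ with $\kappa(m)=v$; i.e. $\mathbb V_d\subseteq\kappa(\mathbb M)$.
   Context: Notation. For $d\ge 1$, $\mathbb H_d$ is the set of complex linear subspaces of $\mathbb C^d$, ordered by inclusion $\le$, with $\top=\mathbb C^d$, $\bot=\{0\}$, $p^\bot$ the orthogonal complement, $p\wedge q=p\cap q$ and $p\vee q=p+q$. $\mathbb V_d\subseteq\mathbb H_d$ is the set of one-dimensional subspaces (rays). $\mathbb U_d$ is the set of unitary operators on $\mathbb C^d$, and for $U\in\mathbb U_d$, $p\in\mathbb H_d$, $U(p)=\{Uv: v\in p\}$. The Sasaki projection is $p\,\&\,q := q\cap(q^\bot+p)$. Subspaces $p,q$ are compatible iff $p=(p\wedge q)\vee(p\wedge q^\bot)$. Language $\mathcal L_d$: a first-order language without equality and without constants, having a unary function symbol $u_U$ for each $U\in\mathbb U_d$, a unary function symbol $\pi_q$ for each $q\in\mathbb H_d$, and a unary relation symbol $[\,\cdot:p]$ for each $p\in\mathbb H_d$. Theory $\mathrm{PQM}_d$ (over $\mathcal L_d$) has the following axioms, for all $p,q\in\mathbb H_d$ and $U\in\mathbb U_d$: ($\neg\bot$) $\exists x\,\neg[x:\bot]$; ($\top$) $\forall x\,[x:\top]$;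 ($\le$) if $p\le q$: $\forall x\,([x:p]\to[x:q])$; ($\wedge$) if $p,q$ are compatible: $\forall x\,([x:p]\wedge[x:q]\to[x:p\wedge q])$; ($\pi_i$) $\forall x\,([x:p]\to[\pi_q(x):p\,\&\,q])$; ($\pi_c$) if $p\le q$: $\forall x\,([\pi_p(\pi_q(x)):\bot]\to[\pi_p(x):\bot])$; ($\pi_\bot$) $\forall x\,([\pi_q(x):\bot]\to[x:q^\bot])$; ($u_i$) $\forall x\,([x:p]\to[u_U(x):U(p)])$; ($u_e$) $\forall x\,([u_U(x):p]\to[x:U^{-1}(p)])$. *)

theory Defs
  imports "HOL-Analysis.Analysis"
begin

text \<open>Ambient space: complex^'n, i.e. C^d with d = CARD('n).\<close>

definition csubspace_vec :: "(complex ^ 'n) set \<Rightarrow> bool" where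
  "csubspace_vec S \<longleftrightarrow> 0 \<in> S \<and> (\<forall>x\<in>S. \<forall>y\<in>S. x + y \<in> S) \<and> (\<forall>c. \<forall>x\<in>S. c *s x \<in> S)"

definition Hd :: "(complex ^ 'n) set set" where
  "Hd = {S. csubspace_vec S}"

definition Vd :: "(complex ^ 'n) set set" where
  "Vd = {S. \<exists>v. v \<noteq> 0 \<and> S = {c *s v | c. True}}"

definition cinner_vec :: "complex ^ 'n \<Rightarrow> complex ^ 'n \<Rightarrow> complex" where
  "cinner_vec x y = (\<Sum>i\<in>UNIV. cnj (x $ i) * y $ i)"

definition ocomp :: "(complex ^ 'n) set \<Rightarrow> (complex ^ 'n) set" where
  "ocomp p = {y. \<forall>x\<in>p. cinner_vec x y = 0}"

definition ssum :: "(complex ^ 'n) set \<Rightarrow> (complex ^ 'n) set \<Rightarrow> (complex ^ 'n) set" where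
  "ssum p q = {x + y | x y. x \<in> p \<and> y \<in> q}"

definition sasaki :: "(complex ^ 'n) set \<Rightarrow> (complex ^ 'n) set \<Rightarrow> (complex ^ 'n) set" where
  "sasaki p q = q \<inter> ssum (ocomp q) p"

definition compatible :: "(complex ^ 'n) set \<Rightarrow> (complex ^ 'n) set \<Rightarrow> bool" where
  "compatible p q \<longleftrightarrow> p = ssum (p \<inter> q) (p \<inter> ocomp q)"

definition adjoint_mat :: "complex ^ 'n ^ 'n \<Rightarrow> complex ^ 'n ^ 'n" where
  "adjoint_mat U = (\<chi> i j. cnj (U $ j $ i))"

definition unitary_mat :: "complex ^ 'n ^ 'n \<Rightarrow> bool" where
  "unitary_mat U \<longleftrightarrow> U ** adjoint_mat U = mat 1 \<and> adjoint_mat U ** U = mat 1"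

definition app_op :: "complex ^ 'n ^ 'n \<Rightarrow> (complex ^ 'n) set \<Rightarrow> (complex ^ 'n) set" where
  "app_op U p = (\<lambda>v. U *v v) ` p"

text \<open>A structure for the language L_d with domain the type 'm:
  rel p x  interprets  [x : p],  proj q  interprets  pi_q,  uu U  interprets  u_U.
  (Symbols are indexed by all p in H_d and all unitary U; values at other indices are irrelevant.)
  PQM_model states that the structure satisfies all axioms of PQM_d.\<close>
definition PQM_model ::
  "((complex ^ 'n) set \<Rightarrow> 'm \<Rightarrow> bool) \<Rightarrow> ((complex ^ 'n) set \<Rightarrow> 'm \<Rightarrow> 'm)
     \<Rightarrow> (complex ^ 'n ^ 'n \<Rightarrow> 'm \<Rightarrow> 'm) \<Rightarrow> bool" where
  "PQM_model rel proj uu \<longleftrightarrow>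
     (\<exists>x. \<not> rel {0} x)
   \<and> (\<forall>x. rel UNIV x)
   \<and> (\<forall>p\<in>Hd. \<forall>q\<in>Hd. p \<subseteq> q \<longrightarrow> (\<forall>x. rel p x \<longrightarrow> rel q x))
   \<and> (\<forall>p\<in>Hd. \<forall>q\<in>Hd. compatible p q \<longrightarrow> (\<forall>x. rel p x \<and> rel q x \<longrightarrow> rel (p \<inter> q) x))
   \<and> (\<forall>p\<in>Hd. \<forall>q\<in>Hd. \<forall>x. rel p x \<longrightarrow> rel (sasaki p q) (proj q x))
   \<and> (\<forall>p\<in>Hd. \<forall>q\<in>Hd. p \<subseteq> q \<longrightarrow> (\<forall>x. rel {0} (proj p (proj q x)) \<longrightarrow> rel {0} (proj p x)))
   \<and> (\<forall>q\<in>Hd. \<forall>x. rel {0} (proj q x) \<longrightarrow> rel (ocomp q) x)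
   \<and> (\<forall>U. unitary_mat U \<longrightarrow> (\<forall>p\<in>Hd. \<forall>x. rel p x \<longrightarrow> rel (app_op U p) (uu U x)))
   \<and> (\<forall>U. unitary_mat U \<longrightarrow> (\<forall>p\<in>Hd. \<forall>x. rel p (uu U x) \<longrightarrow> rel (app_op (matrix_inv U) p) x))"

end

theory Submission
  imports Defs
begin

text \<open>If the support \<open>\<kappa> x\<close> of a state x contains a vector a with
  \<open>\<langle>v, a\<rangle> \<noteq> 0\<close>, then for the ray q through v the state \<open>\<pi>\<^sub>q x\<close> has support exactly q:
  axiom (\<open>\<pi>\<^sub>i\<close>) puts \<open>\<kappa> (\<pi>\<^sub>q x)\<close> inside \<open>\<kappa> x & q \<le> q\<close>, and axiom (\<open>\<pi>\<^sub>\<bottom>\<close>)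
  keeps it nonzero because a is not orthogonal to q.
  Axiom (\<open>\<not>\<bottom>\<close>) provides a state with a nonzero vector a in its support. Any ray
  through v is then reached in at most three such projections: directly if
  \<open>\<langle>v, a\<rangle> \<noteq> 0\<close>, and otherwise via the rays through a and a + v.\<close>

definition cray :: "complex ^ 'n \<Rightarrow> (complex ^ 'n) set" where
  "cray v = {c *s v | c. True}"

lemma mem_cray_self: "v \<in> cray v"
proof -
  have "v = 1 *s v" by simp
  then show ?thesis unfolding cray_def by blast
qed

lemma Vd_eq: "Vd = {cray v | v. v \<noteq> 0}"
  unfolding Vd_def cray_def by blast

lemma cinner_vec_add_left: "cinner_vec (x + y) z = cinner_vec x z + cinner_vec y z"
  unfolding cinner_vec_def by (simp add: distrib_right sum.distrib)

lemma cinner_vec_add_right: "cinner_vec x (y + z) = cinner_vec x y + cinner_vec x z"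
  unfolding cinner_vec_def by (simp add: distrib_left sum.distrib)

lemma cinner_vec_scale_right: "cinner_vec x (c *s y) = c * cinner_vec x y"
  unfolding cinner_vec_def by (simp add: sum_distrib_left algebra_simps)

lemma cinner_vec_self_eq_0_iff: "cinner_vec x x = 0 \<longleftrightarrow> x = 0"
proof
  assume "cinner_vec x x = 0"
  moreover have "cinner_vec x x = of_real (\<Sum>i\<in>UNIV. (cmod (x $ i))\<^sup>2)"
    unfolding cinner_vec_def of_real_sum
    by (rule sum.cong) (simp_all add: complex_norm_square mult.commute del: of_real_power)
  ultimately have "(\<Sum>i\<in>UNIV. (cmod (x $ i))\<^sup>2) = 0"
    by (simp only: of_real_eq_0_iff)
  then have "\<forall>i. (cmod (x $ i))\<^sup>2 = 0"
    by (subst (asm) sum_nonneg_eq_0_iff) auto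
  then show "x = 0" by (simp add: vec_eq_iff)
qed (simp add: cinner_vec_def)

lemma HdI:
  assumes "0 \<in> S" "\<And>x y. x \<in> S \<Longrightarrow> y \<in> S \<Longrightarrow> x + y \<in> S"
    "\<And>c x. x \<in> S \<Longrightarrow> c *s x \<in> S"
  shows "S \<in> Hd"
  using assms unfolding Hd_def csubspace_vec_def by blast

lemma Hd_zero: "S \<in> Hd \<Longrightarrow> 0 \<in> S"
  and Hd_add: "S \<in> Hd \<Longrightarrow> x \<in> S \<Longrightarrow> y \<in> S \<Longrightarrow> x + y \<in> S"
  and Hd_scale: "S \<in> Hd \<Longrightarrow> x \<in> S \<Longrightarrow> c *s x \<in> S"
  unfolding Hd_def csubspace_vec_def by blast+

lemma zero_in_Hd: "{0} \<in> Hd"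
  by (rule HdI) auto

lemma ocomp_in_Hd: "ocomp q \<in> Hd"
  by (rule HdI)
    (simp_all add: ocomp_def cinner_vec_add_right cinner_vec_scale_right, simp add: cinner_vec_def)

lemma cray_in_Hd: "cray v \<in> Hd"
proof (rule HdI)
  have "0 = 0 *s v" by simp
  then show "0 \<in> cray v" unfolding cray_def by blast
next
  fix x y assume "x \<in> cray v" "y \<in> cray v"
  then obtain c c' where "x = c *s v" "y = c' *s v" unfolding cray_def by blast
  then have "x + y = (c + c') *s v" by (simp add: vector_sadd_rdistrib)
  then show "x + y \<in> cray v" unfolding cray_def by blast
next
  fix c x assume "x \<in> cray v"
  then obtain c' where "x = c' *s v" unfolding cray_def by blast
  then have "c *s x = (c * c') *s v" by simp
  then show "c *s x \<in> cray v" unfolding cray_def by blast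
qed

lemma ssum_in_Hd:
  assumes p: "p \<in> Hd" and q: "q \<in> Hd"
  shows "ssum p q \<in> Hd"
proof (rule HdI)
  have "(0 :: complex ^ 'n) = 0 + 0" by simp
  then show "0 \<in> ssum p q" unfolding ssum_def using Hd_zero[OF p] Hd_zero[OF q] by blast
next
  fix a b assume "a \<in> ssum p q" "b \<in> ssum p q"
  then obtain x1 y1 x2 y2 where "a = x1 + y1" "b = x2 + y2"
    and mem: "x1 \<in> p" "y1 \<in> q" "x2 \<in> p" "y2 \<in> q"
    unfolding ssum_def by blast
  then have "a + b = (x1 + x2) + (y1 + y2)" by (simp add: algebra_simps)
  moreover have "x1 + x2 \<in> p" "y1 + y2 \<in> q" using mem Hd_add p q by blast+
  ultimately show "a + b \<in> ssum p q" unfolding ssum_def by blast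
next
  fix c a assume "a \<in> ssum p q"
  then obtain x y where "a = x + y" "x \<in> p" "y \<in> q" unfolding ssum_def by blast
  moreover have "c *s (x + y) = c *s x + c *s y" by (simp add: vector_add_ldistrib)
  moreover have "c *s x \<in> p" "c *s y \<in> q" using calculation Hd_scale p q by blast+
  ultimately show "c *s a \<in> ssum p q" unfolding ssum_def by blast
qed

lemma Int_in_Hd: "p \<in> Hd \<Longrightarrow> q \<in> Hd \<Longrightarrow> p \<inter> q \<in> Hd"
  by (rule HdI) (auto intro: Hd_zero Hd_add Hd_scale)

lemma sasaki_in_Hd: "p \<in> Hd \<Longrightarrow> q \<in> Hd \<Longrightarrow> sasaki p q \<in> Hd"
  unfolding sasaki_def by (intro Int_in_Hd ssum_in_Hd ocomp_in_Hd)

lemma subspace_eq_cray: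
  assumes S: "S \<in> Hd" and "S \<subseteq> cray v" "b \<in> S" "b \<noteq> 0"
  shows "S = cray v"
proof -
  obtain c where c: "b = c *s v" using assms(2,3) unfolding cray_def by blast
  with assms(4) have "c \<noteq> 0" by auto
  with c have "inverse c *s b = v" by simp
  then have "v \<in> S" using Hd_scale[OF S assms(3)] by metis
  then have "cray v \<subseteq> S" unfolding cray_def using Hd_scale[OF S] by blast
  with assms(2) show ?thesis by blast
qed

locale pqm_state_map =
  fixes rel :: "(complex ^ 'n) set \<Rightarrow> 'm \<Rightarrow> bool"
    and proj :: "(complex ^ 'n) set \<Rightarrow> 'm \<Rightarrow> 'm"
    and uu :: "complex ^ 'n ^ 'n \<Rightarrow> 'm \<Rightarrow> 'm"
    and \<kappa> :: "'m \<Rightarrow> (complex ^ 'n) set"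
  assumes model: "PQM_model rel proj uu"
    and kappa_in_Hd: "\<kappa> m \<in> Hd"
    and rel_iff: "p \<in> Hd \<Longrightarrow> rel p m \<longleftrightarrow> \<kappa> m \<subseteq> p"
begin

lemma exists_not_rel_zero: "\<exists>x. \<not> rel {0} x"
  using model unfolding PQM_model_def by (elim conjE)

lemma rel_proj_sasaki:
  assumes "p \<in> Hd" "q \<in> Hd" "rel p x"
  shows "rel (sasaki p q) (proj q x)"
proof -
  have "\<forall>p\<in>Hd. \<forall>q\<in>Hd. \<forall>x. rel p x \<longrightarrow> rel (sasaki p q) (proj q x)"
    using model unfolding PQM_model_def by (elim conjE)
  with assms show ?thesis by blast
qed

lemma rel_ocomp_if_proj_zero:
  assumes "q \<in> Hd" "rel {0} (proj q x)"
  shows "rel (ocomp q) x"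
proof -
  have "\<forall>q\<in>Hd. \<forall>x. rel {0} (proj q x) \<longrightarrow> rel (ocomp q) x"
    using model unfolding PQM_model_def by (elim conjE)
  with assms show ?thesis by blast
qed

lemma exists_nonzero_support: "\<exists>x a. a \<in> \<kappa> x \<and> a \<noteq> 0"
  using exists_not_rel_zero rel_iff[OF zero_in_Hd] by blast

lemma kappa_proj_subset:
  assumes "q \<in> Hd"
  shows "\<kappa> (proj q x) \<subseteq> q"
proof -
  have "rel (\<kappa> x) x" using rel_iff kappa_in_Hd by blast
  then have "rel (sasaki (\<kappa> x) q) (proj q x)"
    using rel_proj_sasaki[OF kappa_in_Hd assms] by blast
  then have "\<kappa> (proj q x) \<subseteq> sasaki (\<kappa> x) q"
    using rel_iff sasaki_in_Hd[OF kappa_in_Hd assms] by blast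
  then show ?thesis unfolding sasaki_def by blast
qed

lemma kappa_proj_nonzero:
  assumes "q \<in> Hd" "\<not> \<kappa> x \<subseteq> ocomp q"
  shows "\<exists>b \<in> \<kappa> (proj q x). b \<noteq> 0"
proof -
  have "\<not> rel (ocomp q) x" using assms rel_iff[OF ocomp_in_Hd] by blast
  then have "\<not> rel {0} (proj q x)" using rel_ocomp_if_proj_zero assms(1) by blast
  then show ?thesis using rel_iff[OF zero_in_Hd] by blast
qed

lemma kappa_proj_cray:
  assumes "a \<in> \<kappa> x" "cinner_vec v a \<noteq> 0"
  shows "\<kappa> (proj (cray v) x) = cray v"
proof -
  have "a \<notin> ocomp (cray v)" using assms(2) mem_cray_self unfolding ocomp_def by blast
  then obtain b where "b \<in> \<kappa> (proj (cray v) x)" "b \<noteq> 0"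
    using kappa_proj_nonzero[OF cray_in_Hd] assms(1) by blast
  then show ?thesis
    using subspace_eq_cray kappa_in_Hd kappa_proj_subset[OF cray_in_Hd] by blast
qed

lemma cray_in_range:
  assumes "v \<noteq> 0"
  shows "cray v \<in> range \<kappa>"
proof -
  obtain x a where a: "a \<in> \<kappa> x" "a \<noteq> 0" using exists_nonzero_support by blast
  show ?thesis
  proof (cases "cinner_vec v a = 0")
    case False
    then show ?thesis using kappa_proj_cray[OF a(1)] by (metis rangeI)
  next
    case True
    let ?y = "proj (cray a) x"
    let ?z = "proj (cray (a + v)) ?y"
    have "a \<in> \<kappa> ?y"
      using kappa_proj_cray[OF a(1)] a(2) mem_cray_self cinner_vec_self_eq_0_iff by metis
    moreover have "cinner_vec (a + v) a \<noteq> 0"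
      using True a(2) by (simp add: cinner_vec_add_left cinner_vec_self_eq_0_iff)
    ultimately have "a + v \<in> \<kappa> ?z" using kappa_proj_cray mem_cray_self by metis
    moreover have "cinner_vec v (a + v) \<noteq> 0"
      using True assms by (simp add: cinner_vec_add_right cinner_vec_self_eq_0_iff)
    ultimately show ?thesis using kappa_proj_cray by (metis rangeI)
  qed
qed

end

text \<open>The bound \<open>d \<ge> 3\<close> is needed only for the existence of \<open>\<kappa>\<close>, which is
  assumed here.\<close>

theorem mainTheorem13:
  fixes rel :: "(complex ^ 'n) set \<Rightarrow> 'm \<Rightarrow> bool"
    and proj :: "(complex ^ 'n) set \<Rightarrow> 'm \<Rightarrow> 'm"
    and uu :: "complex ^ 'n ^ 'n \<Rightarrow> 'm \<Rightarrow> 'm"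
    and \<kappa> :: "'m \<Rightarrow> (complex ^ 'n) set"
  assumes "CARD('n) \<ge> 3"
    and "PQM_model rel proj uu"
    and "\<forall>m. \<kappa> m \<in> Hd"
    and "\<forall>m. \<forall>p\<in>Hd. rel p m \<longleftrightarrow> \<kappa> m \<subseteq> p"
  shows "Vd \<subseteq> \<kappa> ` UNIV"
proof -
  interpret pqm_state_map rel proj uu \<kappa>
    using assms(2-4) by unfold_locales auto
  show ?thesis unfolding Vd_eq using cray_in_range by blast
qed

end
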